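(* For every integer $n\ge 0$, \[ B_{n,q}=\sum_{k=0}^{n}(-1)^k2^{n-2k}k!\,S_2(n,k)\,d_{k,q}. \]
   Context: Let $p$ be a fixed odd prime, $\mathbb{C}_p$ the completion of the algebraic closure of $\mathbb{Q}_p$, with $|p|_p=1/p$. Let $q\in\mathbb{C}_p$ with $|1-q|_p<p^{-1/(p-1)}$, and $\log$ the $p$-adic logarithm. The $q$-Bernoulli numbers $B_{n,q}$ are defined by $\frac{(q-1)+\frac{q-1}{\log q}t}{qe^t-1}=\sum_{n\ge0}B_{n,q}\frac{t^n}{n!}$. The numbers $d_{n,q}$ are defined by \[ \frac{q-1+\frac{q-1}{\log q}\cdot\frac12\log(1-4t)}{q\sqrt{1-4t}-1}=\sum_{n=0}^{\infty}d_{n,q}t^n, \] for $t\in\mathbb{C}_p$ with $|t|_p<p^{-1/(p-1)}$. $S_2(n,k)$ are the Stirling numbers of the second kind, defined by $x^n=\sum_{l=0}^n S_2(n,l)(x)_l$, where $(x)_0=1$, $(x)_l=x(x-1)\cdots(x-l+1)$. *)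

theory Defs
  imports "HOL-Computational_Algebra.Formal_Power_Series" "HOL-Combinatorics.Stirling"
begin

text \<open>Generating functions are treated as formal power series over a field of
characteristic 0 containing q and L = log q.\<close>

definition qbern_gf :: "'a::field_char_0 \<Rightarrow> 'a \<Rightarrow> 'a fps" where
  "qbern_gf q L =
     (fps_const (q - 1) + fps_const ((q - 1) / L) * fps_X) /
     (fps_const q * fps_exp 1 - 1)"

definition qbern :: "'a::field_char_0 \<Rightarrow> 'a \<Rightarrow> nat \<Rightarrow> 'a" where
  "qbern q L n = fact n * fps_nth (qbern_gf q L) n"

definition sqrt_1m4t :: "'a::field_char_0 fps" where
  "sqrt_1m4t = fps_binomial (1/2) oo (- fps_const 4 * fps_X)"

definition log_1m4t :: "'a::field_char_0 fps" where
  "log_1m4t = fps_ln 1 oo (- fps_const 4 * fps_X)"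

definition d_gf :: "'a::field_char_0 \<Rightarrow> 'a \<Rightarrow> 'a fps" where
  "d_gf q L =
     (fps_const (q - 1) + fps_const ((q - 1) / L) * fps_const (1/2) * log_1m4t) /
     (fps_const q * sqrt_1m4t - 1)"

definition dq :: "'a::field_char_0 \<Rightarrow> 'a \<Rightarrow> nat \<Rightarrow> 'a" where
  "dq q L n = fps_nth (d_gf q L) n"

end

theory Submission
  imports Defs
begin

text \<open>Substituting t = (1 - e^(2s))/4 turns sqrt(1 - 4t) into e^s and (1/2) log(1 - 4t) into s,
  so the generating function of the d_{k,q} becomes that of the B_{n,q}. Expanding the composition
  with (e^(2s) - 1)^k = k! \<Sum>_n S_2(n,k) (2s)^n / n! gives the formula.\<close>

lemma fps_deriv_exp_minus_one_power:
  fixes c :: "'a::field_char_0"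
  shows "fps_deriv ((fps_exp c - 1) ^ Suc k) =
    fps_const (of_nat (Suc k) * c) * ((fps_exp c - 1) ^ Suc k + (fps_exp c - 1) ^ k)"
proof -
  have "fps_deriv ((fps_exp c - 1) ^ Suc k) =
      fps_const (of_nat (Suc k)) * (fps_const c * fps_exp c) * (fps_exp c - 1) ^ k"
    by (simp only: fps_deriv_power) simp
  also have "\<dots> = fps_const (of_nat (Suc k)) * fps_const c *
      ((fps_exp c - 1) * (fps_exp c - 1) ^ k + (fps_exp c - 1) ^ k)"
    by (simp add: algebra_simps)
  finally show ?thesis
    by (simp only: fps_const_mult power_Suc)
qed

lemma fps_nth_exp_minus_one_power:
  fixes c :: "'a::field_char_0"
  shows "fps_nth ((fps_exp c - 1) ^ k) n = c ^ n * of_nat (fact k * Stirling n k) / fact n"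
proof (induction n arbitrary: k)
  case 0
  then show ?case by (cases k) auto
next
  case (Suc n)
  show ?case
  proof (cases k)
    case 0
    then show ?thesis by simp
  next
    case (Suc j)
    let ?E = "fps_exp c - 1"
    have "of_nat (Suc n) * fps_nth (?E ^ Suc j) (Suc n) = fps_nth (fps_deriv (?E ^ Suc j)) n"
      by (simp only: fps_deriv_nth Suc_eq_plus1)
    also have "\<dots> = of_nat (Suc j) * c * (fps_nth (?E ^ Suc j) n + fps_nth (?E ^ j) n)"
      by (simp only: fps_deriv_exp_minus_one_power fps_mult_left_const_nth fps_add_nth)
    also have "\<dots> = of_nat (Suc j) * c *
        (c ^ n * of_nat (fact (Suc j) * Stirling n (Suc j)) / fact n +
         c ^ n * of_nat (fact j * Stirling n j) / fact n)"
      by (simp only: Suc.IH)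
    \<comment> \<open>the recurrence of the Stirling numbers\<close>
    also have "\<dots> = c ^ Suc n * of_nat (fact (Suc j) * Stirling (Suc n) (Suc j)) / fact n"
      by (simp add: field_simps)
    finally show ?thesis
      using Suc by (simp add: field_simps del: of_nat_Suc)
  qed
qed

lemma fps_square_eq_imp_eq:
  fixes f g :: "'a::field_char_0 fps"
  assumes "f ^ 2 = g ^ 2" and "fps_nth f 0 = fps_nth g 0" and "fps_nth g 0 \<noteq> 0"
  shows "f = g"
proof -
  have "(f - g) * (f + g) = 0"
    using assms(1) by (simp add: algebra_simps power2_eq_square)
  moreover have "f + g \<noteq> 0"
  proof
    assume "f + g = 0"
    then have "fps_nth f 0 + fps_nth g 0 = 0"
      by (metis fps_add_nth fps_zero_nth)
    with assms(2,3) show False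
      by simp
  qed
  ultimately show ?thesis
    by auto
qed

lemma fps_binomial_half_compose_exp:
  fixes c :: "'a::field_char_0"
  shows "fps_binomial (1/2) oo (fps_exp (2 * c) - 1) = fps_exp c"
proof (rule fps_square_eq_imp_eq)
  have "(fps_binomial (1/2) oo (fps_exp (2 * c) - 1)) ^ 2 =
      fps_binomial (1/2) ^ 2 oo (fps_exp (2 * c) - 1)"
    by (simp add: fps_compose_power)
  also have "\<dots> = fps_exp (2 * c)"
    by (simp add: fps_binomial_power fps_binomial_1 fps_compose_add_distrib)
  also have "\<dots> = fps_exp c ^ 2"
    by (simp add: fps_exp_power_mult)
  finally show "(fps_binomial (1/2) oo (fps_exp (2 * c) - 1)) ^ 2 = fps_exp c ^ 2" .
qed simp_all

lemma fps_ln_compose_exp_minus_one: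
  fixes c :: "'a::field_char_0"
  shows "fps_ln 1 oo (fps_exp c - 1) = fps_const c * fps_X"
proof -
  have "fps_exp c - 1 = (fps_exp 1 - 1) oo (fps_const c * fps_X)"
    by (simp add: fps_compose_sub_distrib)
  then have "fps_ln 1 oo (fps_exp c - 1) =
      (fps_inv (fps_exp 1 - 1) oo (fps_exp 1 - 1)) oo (fps_const c * fps_X)"
    by (simp add: fps_ln_fps_exp_inv fps_compose_assoc)
  also have "\<dots> = fps_const c * fps_X"
    by (simp add: fps_inv_fps_exp_compose)
  finally show ?thesis .
qed

definition one_minus_exp2_quarter :: "'a::field_char_0 fps" where
  "one_minus_exp2_quarter = fps_const (- 1/4) * (fps_exp 2 - 1)"

lemma one_minus_exp2_quarter_nth_0 [simp]: "fps_nth one_minus_exp2_quarter 0 = 0"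
  by (simp add: one_minus_exp2_quarter_def)

lemma minus_4X_compose_one_minus_exp2_quarter:
  "(- fps_const 4 * fps_X) oo one_minus_exp2_quarter = (fps_exp 2 - 1 :: 'a::field_char_0 fps)"
proof -
  have "(- fps_const 4 * fps_X) oo one_minus_exp2_quarter =
      fps_const (- 4) * (fps_X oo (one_minus_exp2_quarter :: 'a fps))"
    by (simp flip: fps_const_mult_apply_left)
  then show ?thesis
    by (simp add: one_minus_exp2_quarter_def mult.assoc[symmetric])
qed

lemma sqrt_1m4t_compose_one_minus_exp2_quarter:
  "sqrt_1m4t oo one_minus_exp2_quarter = (fps_exp 1 :: 'a::field_char_0 fps)"
proof -
  have "sqrt_1m4t oo one_minus_exp2_quarter =
      fps_binomial (1/2) oo ((- fps_const 4 * fps_X) oo (one_minus_exp2_quarter :: 'a fps))"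
    unfolding sqrt_1m4t_def by (rule fps_compose_assoc[symmetric]) simp_all
  also have "\<dots> = fps_exp 1"
    using fps_binomial_half_compose_exp[of "1 :: 'a"]
    by (simp only: minus_4X_compose_one_minus_exp2_quarter) simp
  finally show ?thesis .
qed

lemma log_1m4t_compose_one_minus_exp2_quarter:
  "log_1m4t oo one_minus_exp2_quarter = (fps_const 2 * fps_X :: 'a::field_char_0 fps)"
proof -
  have "log_1m4t oo one_minus_exp2_quarter =
      fps_ln 1 oo ((- fps_const 4 * fps_X) oo (one_minus_exp2_quarter :: 'a fps))"
    unfolding log_1m4t_def by (rule fps_compose_assoc[symmetric]) simp_all
  then show ?thesis
    by (simp only: minus_4X_compose_one_minus_exp2_quarter fps_ln_compose_exp_minus_one)
qed

lemma d_gf_compose_one_minus_exp2_quarter: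
  fixes q L :: "'a::field_char_0"
  assumes "q \<noteq> 1"
  shows "d_gf q L oo one_minus_exp2_quarter = qbern_gf q L"
proof -
  have "fps_nth (fps_const q * sqrt_1m4t - 1) 0 \<noteq> 0"
    using assms by (simp add: sqrt_1m4t_def)
  then have "d_gf q L oo one_minus_exp2_quarter =
      ((fps_const (q - 1) + fps_const ((q - 1) / L) * fps_const (1/2) * log_1m4t)
        oo one_minus_exp2_quarter) /
      ((fps_const q * sqrt_1m4t - 1) oo one_minus_exp2_quarter)"
    unfolding d_gf_def by (intro fps_divide_compose) simp_all
  also have "(fps_const (q - 1) + fps_const ((q - 1) / L) * fps_const (1/2) * log_1m4t)
      oo one_minus_exp2_quarter = fps_const (q - 1) + fps_const ((q - 1) / L) * fps_X"
    by (simp only: mult.assoc fps_compose_add_distrib fps_const_compose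
        log_1m4t_compose_one_minus_exp2_quarter flip: fps_const_mult_apply_left)
      (simp add: mult.assoc[symmetric])
  also have "(fps_const q * sqrt_1m4t - 1) oo one_minus_exp2_quarter = fps_const q * fps_exp 1 - 1"
    by (simp add: fps_compose_sub_distrib sqrt_1m4t_compose_one_minus_exp2_quarter
        flip: fps_const_mult_apply_left)
  finally show ?thesis
    unfolding qbern_gf_def .
qed

lemma one_minus_exp2_quarter_power_nth:
  "fps_nth (one_minus_exp2_quarter ^ k) n =
    ((- 1) ^ k * 2 ^ n / 4 ^ k * fact k * of_nat (Stirling n k) / fact n :: 'a::field_char_0)"
proof -
  have "fps_nth (one_minus_exp2_quarter ^ k) n =
      (- 1/4) ^ k * (2 ^ n * of_nat (fact k * Stirling n k) / fact n :: 'a)"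
    by (simp add: one_minus_exp2_quarter_def power_mult_distrib fps_const_power
        fps_nth_exp_minus_one_power)
  then show ?thesis
    by (simp add: power_minus[of "1/4"] power_one_over field_simps)
qed

lemma power_int_diff_double:
  fixes x :: "'a::field"
  assumes "x \<noteq> 0"
  shows "x powi (int n - 2 * int k) = x ^ n / (x ^ 2) ^ k"
  using assms by (simp add: power_int_diff power_int_mult)

theorem theorem4:
  fixes q L :: "'a::field_char_0" and n :: nat
  assumes "q \<noteq> 1" and "L \<noteq> 0"
  shows "qbern q L n =
    (\<Sum>k=0..n. (-1)^k * 2 powi (int n - 2 * int k) * fact k * of_nat (Stirling n k) * dq q L k)"
proof -
  have "qbern q L n = fact n * fps_nth (d_gf q L oo one_minus_exp2_quarter) n"
    by (simp add: qbern_def d_gf_compose_one_minus_exp2_quarter assms(1))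
  also have "\<dots> = (\<Sum>k=0..n. fact n * (dq q L k * fps_nth (one_minus_exp2_quarter ^ k) n))"
    by (simp add: fps_compose_nth dq_def sum_distrib_left)
  also have "\<dots> = (\<Sum>k=0..n. (-1)^k * (2 ^ n / (2 ^ 2) ^ k) * fact k *
      of_nat (Stirling n k) * dq q L k)"
    by (simp add: one_minus_exp2_quarter_power_nth mult_ac)
  also have "\<dots> = (\<Sum>k=0..n. (-1)^k * 2 powi (int n - 2 * int k) * fact k *
      of_nat (Stirling n k) * dq q L k)"
    by (simp only: power_int_diff_double[OF zero_neq_numeral[THEN not_sym]])
  finally show ?thesis .
qed

end
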